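(* For all integers $m,n\ge 0$, \[ S(m,n)=(-1)^m\sum_{P\in\mathcal{P}_{m+n}}(-1)^{h_{2m}(P)}, \] where $S(m,n)=\frac{(2m)!\,(2n)!}{m!\,n!\,(m+n)!}$.
   Context: For an integer $N\ge 0$, $\mathcal{P}_N$ denotes the set of all lattice paths $P=(P_0,P_1,\dots,P_{2N})$ from $P_0=(0,0)$ to $P_{2N}=(N,N)$ consisting of unit steps to the right (adding $(1,0)$) and up (adding $(0,1)$). For $0\le k\le 2N$, $h_k(P)$ denotes the $y$-coordinate of $P_k$, i.e. the height of $P$ after its $k$-th step. *)

theory Defs
  imports Complex_Main
begin

text \<open>A lattice path P = (P_0,...,P_{2N}) is represented as the list of its points
  (length 2N+1), each point an (x,y) pair of naturals.\<close>

definition lattice_paths :: "nat \<Rightarrow> (nat \<times> nat) list set" where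
  "lattice_paths N = {P. length P = 2*N + 1 \<and> P ! 0 = (0,0) \<and> P ! (2*N) = (N,N) \<and>
      (\<forall>k < 2*N. P ! (Suc k) = (fst (P ! k) + 1, snd (P ! k)) \<or>
                 P ! (Suc k) = (fst (P ! k), snd (P ! k) + 1))}"

definition height :: "nat \<Rightarrow> (nat \<times> nat) list \<Rightarrow> nat" where
  "height k P = snd (P ! k)"

definition S :: "nat \<Rightarrow> nat \<Rightarrow> real" where
  "S m n = of_nat (fact (2*m) * fact (2*n)) / of_nat (fact m * fact n * fact (m+n))"

end

theory Submission
  imports Defs "HOL-Computational_Algebra.Polynomial"
begin

(*
  Encode a lattice path by its sequence of steps, a boolean list of
  length 2N in which True marks an up-step; the paths from (0,0) to (N,N) are then
  exactly the lists with N entries True, and h_k(P) is the number of True entries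
  among the first k steps.  Cutting such a list after 2m steps shows that
  \<Sum>_P (-1)^h_{2m}(P) is the coefficient of x^(m+n) in (1-x)^(2m) (1+x)^(2n),
  since (1+wx)^L is the generating function of boolean lists of length L counted
  with weight (wx)^(number of True entries).
  Finally this coefficient a(m,n) and (-1)^m S(m,n) both satisfy
  a(m,n+1) - a(m+1,n) = 4 a(m,n) with a(0,n) = binom(2n,n): for a this is
  (1+x)^2 - (1-x)^2 = 4x, for S an elementary factorial computation.  Induction
  on m gives a(m,n) = (-1)^m S(m,n), which is the theorem.
*)

section \<open>The closed form S\<close>

text \<open>Used to transfer the first-argument recurrence to the second argument.\<close>
lemma S_symmetric: "S m n = S n m"
  unfolding S_def by (simp add: ac_simps)

lemma S_Suc_left: "S (Suc m) n = S m n * (2 * (2 * real m + 1)) / (real m + real n + 1)"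
proof -
  have "fact (2 * Suc m) = (fact (2*m) :: real) * (2 * real m + 1) * (2 * (real m + 1))"
    by (simp add: algebra_simps)
  moreover have "fact (Suc m + n) = (fact (m+n) :: real) * (real m + real n + 1)"
    by simp
  moreover have "(fact k :: real) > 0" for k
    by simp
  ultimately show ?thesis
    unfolding S_def of_nat_mult of_nat_fact fact_Suc
    by (simp add: divide_simps add_pos_pos) (simp add: algebra_simps)
qed

lemma S_recurrence: "S (Suc m) n + S m (Suc n) = 4 * S m n"
proof -
  have "S m (Suc n) = S m n * (2 * (2 * real n + 1)) / (real m + real n + 1)"
    using S_Suc_left[of n m] by (simp add: S_symmetric add.commute)
  then show ?thesis
    by (simp add: S_Suc_left add_divide_distrib[symmetric] field_simps)
qed

lemma S_zero_left: "S 0 n = of_nat ((2*n) choose n)"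
  unfolding S_def by (subst binomial_fact) (auto simp: mult_2)

section \<open>A coefficient of (1-x)^2m (1+x)^2n\<close>

definition alt_coeff :: "nat \<Rightarrow> nat \<Rightarrow> real" where
  "alt_coeff m n = coeff ([:1,-1:] ^ (2*m) * [:1,1:] ^ (2*n)) (m+n)"

text \<open>The same recurrence, up to sign, coming from (1+x)^2 - (1-x)^2 = 4x.\<close>
lemma alt_coeff_recurrence: "alt_coeff m (Suc n) - alt_coeff (Suc m) n = 4 * alt_coeff m n"
proof -
  define F :: "real poly" where "F = [:1,-1:] ^ (2*m) * [:1,1:] ^ (2*n)"
  have square_diff: "[:1,1:] ^ 2 - [:1,-1:] ^ 2 = ([:0,4:] :: real poly)"
    by (simp add: power2_eq_square)
  have "[:1,-1:] ^ (2*m) * [:1,1:] ^ (2 * Suc n) - [:1,-1:] ^ (2 * Suc m) * [:1,1:] ^ (2*n)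
      = F * ([:1,1:] ^ 2 - [:1,-1:] ^ 2)"
    unfolding F_def right_diff_distrib mult_Suc_right power_add power2_eq_square
    by (simp only: mult_ac power_Suc)
  also have "\<dots> = pCons 0 (smult 4 F)"
    unfolding square_diff by (simp add: mult.commute[of F])
  finally have "alt_coeff m (Suc n) - alt_coeff (Suc m) n = coeff (pCons 0 (smult 4 F)) (Suc (m+n))"
    unfolding alt_coeff_def by (metis add_Suc add_Suc_right coeff_diff)
  then show ?thesis
    by (simp add: alt_coeff_def F_def)
qed

lemma alt_coeff_eq_S: "alt_coeff m n = (-1) ^ m * S m n"
proof (induction m arbitrary: n)
  case 0
  have "alt_coeff 0 n = of_nat ((2*n) choose n)"
    unfolding alt_coeff_def by (simp add: coeff_linear_poly_power)
  then show ?case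
    by (simp add: S_zero_left)
next
  case (Suc m)
  have "alt_coeff (Suc m) n = alt_coeff m (Suc n) - 4 * alt_coeff m n"
    using alt_coeff_recurrence[of m n] by simp
  also have "\<dots> = (-1) ^ m * (S m (Suc n) - 4 * S m n)"
    using Suc.IH by (simp add: algebra_simps)
  also have "S m (Suc n) - 4 * S m n = - S (Suc m) n"
    using S_recurrence[of m n] by simp
  also have "(-1) ^ m * (- S (Suc m) n) = (-1) ^ Suc m * S (Suc m) n"
    by simp
  finally show ?case .
qed

section \<open>Boolean lists and their generating function\<close>

lemma sum_lists_monom:
  fixes w :: "'a :: comm_semiring_1"
  shows "(\<Sum>s\<in>{s::bool list. length s = L}. monom (w ^ count_list s True) (count_list s True))
    = [:1,w:] ^ L"
proof (induction L)
  case 0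
  have "{s::bool list. length s = 0} = {[]}"
    by auto
  then show ?case
    by simp
next
  case (Suc L)
  let ?A = "{s::bool list. length s = L}"
  let ?f = "\<lambda>s. monom (w ^ count_list s True) (count_list s True)"
  have split: "{s::bool list. length s = Suc L} = Cons True ` ?A \<union> Cons False ` ?A"
    by (auto simp: length_Suc_conv)
  have "finite ?A"
    using finite_lists_length_eq[of "UNIV :: bool set" L] by simp
  then have "(\<Sum>s\<in>{s. length s = Suc L}. ?f s) = (\<Sum>s\<in>Cons True ` ?A. ?f s) + (\<Sum>s\<in>Cons False ` ?A. ?f s)"
    unfolding split by (intro sum.union_disjoint) auto
  also have "\<dots> = (\<Sum>s\<in>?A. ?f (True # s)) + (\<Sum>s\<in>?A. ?f (False # s))"
    by (simp add: sum.reindex)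
  also have "\<dots> = monom w 1 * (\<Sum>s\<in>?A. ?f s) + (\<Sum>s\<in>?A. ?f s)"
    by (simp add: sum_distrib_left mult_monom)
  also have "\<dots> = (monom w 1 + 1) * [:1,w:] ^ L"
    using Suc.IH by (simp add: algebra_simps)
  also have "monom w 1 + 1 = [:1,w:]"
    by (simp add: monom_Suc one_pCons monom_0)
  finally show ?case
    by simp
qed

lemma coeff_mult_sums_monom:
  fixes f g :: "'b \<Rightarrow> 'a :: comm_semiring_1"
  shows "coeff ((\<Sum>x\<in>A. monom (f x) (c x)) * (\<Sum>y\<in>B. monom (g y) (d y))) N
    = (\<Sum>x\<in>A. \<Sum>y\<in>B. if c x + d y = N then f x * g y else 0)"
  by (simp add: sum_product coeff_sum mult_monom)

lemma sum_lists_append: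
  "(\<Sum>s\<in>{s::'a list. length s = a + b}. f s)
    = (\<Sum>x\<in>{x. length x = a}. \<Sum>y\<in>{y. length y = b}. f (x @ y))"
proof -
  have "(\<Sum>s\<in>{s::'a list. length s = a + b}. f s)
      = (\<Sum>(x,y)\<in>{x. length x = a} \<times> {y. length y = b}. f (x @ y))"
    by (rule sum.reindex_bij_witness[where i = "\<lambda>(x,y). x @ y" and j = "\<lambda>s. (take a s, drop a s)"])
      auto
  then show ?thesis
    by (simp add: sum.cartesian_product)
qed

section \<open>Lattice paths as step sequences\<close>

text \<open>The path with step sequence s (True = up-step): after k steps it has made
  count_list (take k s) True up-steps.\<close>
definition path_of :: "bool list \<Rightarrow> (nat \<times> nat) list" where
  "path_of s = map (\<lambda>k. (k - count_list (take k s) True, count_list (take k s) True))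
     [0..<Suc (length s)]"

definition steps_of :: "nat \<Rightarrow> (nat \<times> nat) list \<Rightarrow> bool list" where
  "steps_of N P = map (\<lambda>k. snd (P ! Suc k) \<noteq> snd (P ! k)) [0..<2*N]"

lemma count_list_take_Suc:
  "k < length s \<Longrightarrow> count_list (take (Suc k) s) x = count_list (take k s) x + (if s ! k = x then 1 else 0)"
  by (simp add: take_Suc_conv_app_nth)

lemma count_list_take_le: "count_list (take k s) x \<le> k"
  using count_le_length[of "take k s" x] by simp

lemma path_of_nth:
  "k \<le> length s \<Longrightarrow> path_of s ! k = (k - count_list (take k s) True, count_list (take k s) True)"
  unfolding path_of_def by (simp add: nth_append less_Suc_eq_le del: upt_Suc)

lemma height_path_of: "k \<le> length s \<Longrightarrow> height k (path_of s) = count_list (take k s) True"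
  by (simp add: height_def path_of_nth)

lemma path_of_in_lattice_paths:
  assumes len: "length s = 2*N" and ups: "count_list s True = N"
  shows "path_of s \<in> lattice_paths N"
  unfolding lattice_paths_def
proof (intro CollectI conjI allI impI)
  show "length (path_of s) = 2*N + 1"
    using len by (simp add: path_of_def)
  show "path_of s ! 0 = (0,0)" "path_of s ! (2*N) = (N,N)"
    using len ups by (simp_all add: path_of_nth)
  fix k assume "k < 2*N"
  then show "path_of s ! Suc k = (fst (path_of s ! k) + 1, snd (path_of s ! k)) \<or>
      path_of s ! Suc k = (fst (path_of s ! k), snd (path_of s ! k) + 1)"
    using len count_list_take_le[of k s True]
    by (simp add: path_of_nth count_list_take_Suc Suc_diff_le)
qed

lemma lattice_path_nth:
  assumes P: "P \<in> lattice_paths N" and k: "k \<le> 2*N"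
  shows "P ! k = (k - count_list (take k (steps_of N P)) True, count_list (take k (steps_of N P)) True)"
  using k
proof (induction k)
  case 0
  then show ?case
    using P by (simp add: lattice_paths_def)
next
  case (Suc k)
  then have IH: "P ! k = (k - count_list (take k (steps_of N P)) True, count_list (take k (steps_of N P)) True)"
    and k: "k < 2*N" by simp_all
  have step: "steps_of N P ! k = (snd (P ! Suc k) \<noteq> snd (P ! k))"
    using k by (simp add: steps_of_def)
  have "P ! Suc k = (fst (P ! k) + 1, snd (P ! k)) \<or> P ! Suc k = (fst (P ! k), snd (P ! k) + 1)"
    using P k by (simp add: lattice_paths_def)
  then show ?case
    using IH step k count_list_take_le[of k "steps_of N P" True]
    by (auto simp: count_list_take_Suc Suc_diff_le steps_of_def)
qed

lemma bij_path_of: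
  "bij_betw path_of {s. length s = 2*N \<and> count_list s True = N} (lattice_paths N)"
proof (rule bij_betw_byWitness[where f' = "steps_of N"])
  show "\<forall>s\<in>{s. length s = 2*N \<and> count_list s True = N}. steps_of N (path_of s) = s"
    by (auto intro!: nth_equalityI simp: steps_of_def path_of_nth count_list_take_Suc split: if_splits)
  show "\<forall>P\<in>lattice_paths N. path_of (steps_of N P) = P"
  proof
    fix P assume P: "P \<in> lattice_paths N"
    have len: "length (steps_of N P) = 2*N"
      by (simp add: steps_of_def)
    show "path_of (steps_of N P) = P"
    proof (rule nth_equalityI)
      show "length (path_of (steps_of N P)) = length P"
        using P len by (simp add: path_of_def lattice_paths_def)
      fix k assume "k < length (path_of (steps_of N P))"
      then have "k \<le> 2*N"
        using len by (simp add: path_of_def)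
      then show "path_of (steps_of N P) ! k = P ! k"
        using lattice_path_nth[OF P] len by (simp add: path_of_nth)
    qed
  qed
  show "path_of ` {s. length s = 2*N \<and> count_list s True = N} \<subseteq> lattice_paths N"
    by (auto intro: path_of_in_lattice_paths)
  show "steps_of N ` lattice_paths N \<subseteq> {s. length s = 2*N \<and> count_list s True = N}"
    using lattice_path_nth[of _ N "2*N"] by (auto simp: lattice_paths_def steps_of_def)
qed

section \<open>The signed path sum\<close>

text \<open>Summing (-1)^(h_k(P)) over all lattice paths to (N,N) extracts a coefficient of
  (1-x)^k (1+x)^(2N-k): the first k steps carry the sign, the remaining ones do not.\<close>
lemma signed_path_sum:
  assumes k: "k \<le> 2*N"
  shows "(\<Sum>P\<in>lattice_paths N. (-1 :: 'a :: comm_ring_1) ^ height k P)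
    = coeff ([:1,-1:] ^ k * [:1,1:] ^ (2*N - k)) N"
proof -
  let ?lists = "\<lambda>l. {s::bool list. length s = l}"
  let ?ups = "\<lambda>s. count_list s True"
  have fin: "finite (?lists l)" for l
    using finite_lists_length_eq[of "UNIV :: bool set" l] by simp
  have "(\<Sum>P\<in>lattice_paths N. (-1 :: 'a) ^ height k P)
      = (\<Sum>s\<in>{s. length s = 2*N \<and> ?ups s = N}. (-1) ^ ?ups (take k s))"
    using k by (simp add: sum.reindex_bij_betw[OF bij_path_of, symmetric] height_path_of)
  also have "\<dots> = (\<Sum>s\<in>?lists (k + (2*N - k)). if ?ups s = N then (-1) ^ ?ups (take k s) else 0)"
    using k fin by (simp add: sum.inter_filter[symmetric] conj_commute)
  also have "\<dots> = (\<Sum>x\<in>?lists k. \<Sum>y\<in>?lists (2*N - k).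
      if ?ups x + ?ups y = N then (-1) ^ ?ups x * 1 else 0)"
    by (auto simp: sum_lists_append intro!: sum.cong)
  also have "\<dots> = coeff ((\<Sum>x\<in>?lists k. monom ((-1) ^ ?ups x) (?ups x))
      * (\<Sum>y\<in>?lists (2*N - k). monom (1 ^ ?ups y) (?ups y))) N"
    by (simp add: coeff_mult_sums_monom)
  also have "\<dots> = coeff ([:1,-1:] ^ k * [:1,1:] ^ (2*N - k)) N"
    by (simp only: sum_lists_monom)
  finally show ?thesis .
qed

theorem mainTheorem1:
  fixes m n :: nat
  shows "S m n = (-1) ^ m * (\<Sum>P\<in>lattice_paths (m+n). (-1) ^ height (2*m) P)"
proof -
  have "(\<Sum>P\<in>lattice_paths (m+n). (-1) ^ height (2*m) P) = alt_coeff m n"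
    using signed_path_sum[of "2*m" "m+n"] by (simp add: alt_coeff_def)
  then show ?thesis
    by (simp add: alt_coeff_eq_S)
qed

end
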